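(* Let $\mathbb{C}=(\mathbf{C},0,\mathbf{D},\mathcal{R})$ be a reactive system with redex IPOs and let $O$ be a set of contextual barbs. If the set of all labels (all arrows of $\mathbf{C}$) is $O$-capturing and each label is stable under barbed saturated bisimilarity $\sim^{BS}$, then IPO-bisimilarity $\sim^{I}$ coincides with $\sim^{BS}$.
   Context: A reactive system consists of a category $\mathbf{C}$, a distinguished object $0$, a composition-reflecting subcategory $\mathbf{D}$ of reactive contexts, and a set $\mathcal{R}\subseteq\bigcup_I\mathbf{C}(0,I)\times\mathbf{C}(0,I)$ of reduction rules. Terms are arrows with domain $0$; $C[P]$ denotes $C[-]\circ P$. Reduction: $P\rightsquigarrow Q$ iff $P=d\circ l$, $Q=d\circ r$ for some $\langle l,r\rangle\in\mathcal{R}$, $d\in\mathbf{D}$. For a commuting square $c_1\circ a_1=c_2\circ a_2$ with $a_1:K\to I_2$, $a_2:K\to I_3$, $c_1:I_2\to I_4$, $c_2:I_3\to I_4$, a candidate is $\langle I_5,e,f,g\rangle$ with $e\circ a_1=f\circ a_2$, $g\circ e=c_1$, $g\circ f=c_2$; an RPO is a candidate through which every other candidate $\langle I_6,e',f',g'\rangle$ factors via a unique $h:I_5\to I_6$ ($h\circ e=e'$, $h\circ f=f'$, $g'\circ h=g$); the square is an IPO if $\langle I_4,c_1,c_2,\mathrm{id}\rangle$ is an RPO. A redex square is a commuting square $C[-]\circ P=d\circ l$ with $\langle l,r\rangle\in\mathcal{R}$, $d\in\mathbf{D}$; the system has redex IPOs if every redex square has a candidate $\langle I_5,e,f,g\rangle$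 for which the square $e\circ P=f\circ l$ is an IPO. IPO transitions: $P\xrightarrow{C[-]}_I d\circ r$ if $d\in\mathbf{D}$, $\langle l,r\rangle\in\mathcal{R}$ and $C[-]\circ P=d\circ l$ is an IPO. IPO-bisimilarity $\sim^I$ is ordinary strong bisimilarity on this labelled transition system. Barbs are predicates on terms; $P\downarrow_o$ means $P$ satisfies $o\in O$. Barbed saturated bisimilarity $\sim^{BS}$ is the largest symmetric relation $\mathcal{R}'$ such that if $P\,\mathcal{R}'\,Q$ then for all arrows $C[-]$ composable with $P$: $C[P]\downarrow_o$ implies $C[Q]\downarrow_o$, and $C[P]\rightsquigarrow P'$ implies $C[Q]\rightsquigarrow Q'$ with $P'\,\mathcal{R}'\,Q'$. A barb $o$ is contextual if whenever ($P\downarrow_o$ implies $Q\downarrow_o$) then for all $C[-]$, $C[P]\downarrow_o$ implies $C[Q]\downarrow_o$. A set of labels $L$ is $O$-capturing if for each $o\in O$ there is $C[-]\in L$ such that for every term $P$, $P\downarrow_o$ iff $P\xrightarrow{C[-]}_I P'$ for some $P'$. A label $C[-]$ is stable under a relation $\mathcal{R}'$ if whenever $P\,\mathcal{R}'\,Q$ and $P\xrightarrow{C[-]}_I P'$ there is $Q'$ with $Q\xrightarrow{C[-]}_I Q'$ and $P'\,\mathcal{R}'\,Q'$. *)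

theory Defs
  imports Main
begin

text \<open>A category whose arrows are all elements of type 'a and objects all elements of 'o.
  comp g f denotes g composed after f (only meaningful when dom g = cod f).\<close>

record ('o, 'a) cat =
  dom :: "'a \<Rightarrow> 'o"
  cod :: "'a \<Rightarrow> 'o"
  comp :: "'a \<Rightarrow> 'a \<Rightarrow> 'a"
  idt :: "'o \<Rightarrow> 'a"

definition category :: "('o, 'a) cat \<Rightarrow> bool" where
  "category K \<longleftrightarrow>
     (\<forall>X. dom K (idt K X) = X \<and> cod K (idt K X) = X) \<and>
     (\<forall>f g. dom K g = cod K f \<longrightarrow>
        dom K (comp K g f) = dom K f \<and> cod K (comp K g f) = cod K g) \<and>
     (\<forall>f. comp K f (idt K (dom K f)) = f \<and> comp K (idt K (cod K f)) f = f) \<and>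
     (\<forall>f g h. dom K g = cod K f \<longrightarrow> dom K h = cod K g \<longrightarrow>
        comp K h (comp K g f) = comp K (comp K h g) f)"

text \<open>Reactive system (C, 0, D, R): D a composition-reflecting subcategory,
  R a set of rules (l, r) with l, r : 0 \<rightarrow> I.\<close>

definition reactive_system :: "('o, 'a) cat \<Rightarrow> 'o \<Rightarrow> 'a set \<Rightarrow> ('a \<times> 'a) set \<Rightarrow> bool" where
  "reactive_system K z D R \<longleftrightarrow>
     category K \<and>
     (\<forall>d\<in>D. idt K (dom K d) \<in> D \<and> idt K (cod K d) \<in> D) \<and>
     (\<forall>d\<in>D. \<forall>d'\<in>D. dom K d = cod K d' \<longrightarrow> comp K d d' \<in> D) \<and>
     (\<forall>d d'. dom K d = cod K d' \<longrightarrow> comp K d d' \<in> D \<longrightarrow> d \<in> D \<and> d' \<in> D) \<and>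
     (\<forall>(l, r)\<in>R. dom K l = z \<and> dom K r = z \<and> cod K l = cod K r)"

definition "term" :: "('o, 'a) cat \<Rightarrow> 'o \<Rightarrow> 'a \<Rightarrow> bool" where
  "term K z P \<longleftrightarrow> dom K P = z"

definition reduces :: "('o, 'a) cat \<Rightarrow> 'a set \<Rightarrow> ('a \<times> 'a) set \<Rightarrow> 'a \<Rightarrow> 'a \<Rightarrow> bool" where
  "reduces K D R P Q \<longleftrightarrow>
     (\<exists>l r d. (l, r) \<in> R \<and> d \<in> D \<and> dom K d = cod K l \<and>
              P = comp K d l \<and> Q = comp K d r)"

definition comm_square :: "('o, 'a) cat \<Rightarrow> 'a \<Rightarrow> 'a \<Rightarrow> 'a \<Rightarrow> 'a \<Rightarrow> bool" where
  "comm_square K a1 a2 c1 c2 \<longleftrightarrow>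
     dom K a1 = dom K a2 \<and> dom K c1 = cod K a1 \<and> dom K c2 = cod K a2 \<and>
     cod K c1 = cod K c2 \<and> comp K c1 a1 = comp K c2 a2"

definition candidate :: "('o, 'a) cat \<Rightarrow> 'a \<Rightarrow> 'a \<Rightarrow> 'a \<Rightarrow> 'a \<Rightarrow> 'a \<Rightarrow> 'a \<Rightarrow> 'a \<Rightarrow> bool" where
  "candidate K a1 a2 c1 c2 e f g \<longleftrightarrow>
     dom K e = cod K a1 \<and> dom K f = cod K a2 \<and>
     cod K e = cod K f \<and> dom K g = cod K e \<and> cod K g = cod K c1 \<and>
     comp K e a1 = comp K f a2 \<and> comp K g e = c1 \<and> comp K g f = c2"

definition RPO :: "('o, 'a) cat \<Rightarrow> 'a \<Rightarrow> 'a \<Rightarrow> 'a \<Rightarrow> 'a \<Rightarrow> 'a \<Rightarrow> 'a \<Rightarrow> 'a \<Rightarrow> bool" where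
  "RPO K a1 a2 c1 c2 e f g \<longleftrightarrow>
     candidate K a1 a2 c1 c2 e f g \<and>
     (\<forall>e' f' g'. candidate K a1 a2 c1 c2 e' f' g' \<longrightarrow>
        (\<exists>!h. dom K h = cod K e \<and> cod K h = cod K e' \<and>
              comp K h e = e' \<and> comp K h f = f' \<and> comp K g' h = g))"

definition IPO :: "('o, 'a) cat \<Rightarrow> 'a \<Rightarrow> 'a \<Rightarrow> 'a \<Rightarrow> 'a \<Rightarrow> bool" where
  "IPO K a1 a2 c1 c2 \<longleftrightarrow>
     comm_square K a1 a2 c1 c2 \<and> RPO K a1 a2 c1 c2 c1 c2 (idt K (cod K c1))"

definition has_redex_IPOs :: "('o, 'a) cat \<Rightarrow> 'o \<Rightarrow> 'a set \<Rightarrow> ('a \<times> 'a) set \<Rightarrow> bool" where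
  "has_redex_IPOs K z D R \<longleftrightarrow>
     (\<forall>C P d l r. term K z P \<and> (l, r) \<in> R \<and> d \<in> D \<and> comm_square K P l C d \<longrightarrow>
        (\<exists>e f g. candidate K P l C d e f g \<and> IPO K P l e f))"

definition ipo_trans :: "('o, 'a) cat \<Rightarrow> 'o \<Rightarrow> 'a set \<Rightarrow> ('a \<times> 'a) set \<Rightarrow> 'a \<Rightarrow> 'a \<Rightarrow> 'a \<Rightarrow> bool" where
  "ipo_trans K z D R P C P' \<longleftrightarrow>
     term K z P \<and>
     (\<exists>d l r. d \<in> D \<and> (l, r) \<in> R \<and> IPO K P l C d \<and> P' = comp K d r)"

definition term_rel :: "('o, 'a) cat \<Rightarrow> 'o \<Rightarrow> ('a \<times> 'a) set \<Rightarrow> bool" where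
  "term_rel K z Rel \<longleftrightarrow>
     (\<forall>(P, Q)\<in>Rel. term K z P \<and> term K z Q \<and> cod K P = cod K Q)"

definition ipo_bisimulation :: "('o, 'a) cat \<Rightarrow> 'o \<Rightarrow> 'a set \<Rightarrow> ('a \<times> 'a) set \<Rightarrow> ('a \<times> 'a) set \<Rightarrow> bool" where
  "ipo_bisimulation K z D R Rel \<longleftrightarrow>
     term_rel K z Rel \<and>
     (\<forall>(P, Q)\<in>Rel. \<forall>C P'. ipo_trans K z D R P C P' \<longrightarrow>
         (\<exists>Q'. ipo_trans K z D R Q C Q' \<and> (P', Q') \<in> Rel)) \<and>
     (\<forall>(P, Q)\<in>Rel. \<forall>C Q'. ipo_trans K z D R Q C Q' \<longrightarrow>
         (\<exists>P'. ipo_trans K z D R P C P' \<and> (P', Q') \<in> Rel))"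

definition ipo_bisimilar :: "('o, 'a) cat \<Rightarrow> 'o \<Rightarrow> 'a set \<Rightarrow> ('a \<times> 'a) set \<Rightarrow> 'a \<Rightarrow> 'a \<Rightarrow> bool" where
  "ipo_bisimilar K z D R P Q \<longleftrightarrow> (\<exists>Rel. ipo_bisimulation K z D R Rel \<and> (P, Q) \<in> Rel)"

definition bs_bisimulation :: "('o, 'a) cat \<Rightarrow> 'o \<Rightarrow> 'a set \<Rightarrow> ('a \<times> 'a) set \<Rightarrow>
    'b set \<Rightarrow> ('a \<Rightarrow> 'b \<Rightarrow> bool) \<Rightarrow> ('a \<times> 'a) set \<Rightarrow> bool" where
  "bs_bisimulation K z D R Obs barb Rel \<longleftrightarrow>
     term_rel K z Rel \<and> sym Rel \<and>
     (\<forall>(P, Q)\<in>Rel. \<forall>C. dom K C = cod K P \<longrightarrow>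
        (\<forall>o'\<in>Obs. barb (comp K C P) o' \<longrightarrow> barb (comp K C Q) o') \<and>
        (\<forall>P'. reduces K D R (comp K C P) P' \<longrightarrow>
           (\<exists>Q'. reduces K D R (comp K C Q) Q' \<and> (P', Q') \<in> Rel)))"

definition bs_bisimilar :: "('o, 'a) cat \<Rightarrow> 'o \<Rightarrow> 'a set \<Rightarrow> ('a \<times> 'a) set \<Rightarrow>
    'b set \<Rightarrow> ('a \<Rightarrow> 'b \<Rightarrow> bool) \<Rightarrow> 'a \<Rightarrow> 'a \<Rightarrow> bool" where
  "bs_bisimilar K z D R Obs barb P Q \<longleftrightarrow>
     (\<exists>Rel. bs_bisimulation K z D R Obs barb Rel \<and> (P, Q) \<in> Rel)"

definition contextual_barb :: "('o, 'a) cat \<Rightarrow> 'o \<Rightarrow> ('a \<Rightarrow> 'b \<Rightarrow> bool) \<Rightarrow> 'b \<Rightarrow> bool" where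
  "contextual_barb K z barb o' \<longleftrightarrow>
     (\<forall>P Q. term K z P \<and> term K z Q \<and> cod K P = cod K Q \<longrightarrow>
        (barb P o' \<longrightarrow> barb Q o') \<longrightarrow>
        (\<forall>C. dom K C = cod K P \<longrightarrow> barb (comp K C P) o' \<longrightarrow> barb (comp K C Q) o'))"

definition O_capturing :: "('o, 'a) cat \<Rightarrow> 'o \<Rightarrow> 'a set \<Rightarrow> ('a \<times> 'a) set \<Rightarrow>
    'b set \<Rightarrow> ('a \<Rightarrow> 'b \<Rightarrow> bool) \<Rightarrow> 'a set \<Rightarrow> bool" where
  "O_capturing K z D R Obs barb L \<longleftrightarrow>
     (\<forall>o'\<in>Obs. \<exists>C\<in>L. \<forall>P. term K z P \<longrightarrow>
        (barb P o' \<longleftrightarrow> (\<exists>P'. ipo_trans K z D R P C P')))"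

definition stable_label :: "('o, 'a) cat \<Rightarrow> 'o \<Rightarrow> 'a set \<Rightarrow> ('a \<times> 'a) set \<Rightarrow>
    ('a \<Rightarrow> 'a \<Rightarrow> bool) \<Rightarrow> 'a \<Rightarrow> bool" where
  "stable_label K z D R Rel C \<longleftrightarrow>
     (\<forall>P Q P'. Rel P Q \<and> ipo_trans K z D R P C P' \<longrightarrow>
        (\<exists>Q'. ipo_trans K z D R Q C Q' \<and> Rel P' Q'))"

end

theory Submission
  imports Defs
begin

text \<open>Stability of every label under \<open>\<sim>\<^sup>B\<^sup>S\<close> says precisely that \<open>\<sim>\<^sup>B\<^sup>S\<close> is an
  IPO-bisimulation, so \<open>\<sim>\<^sup>B\<^sup>S \<subseteq> \<sim>\<^sup>I\<close>. Conversely, the closure of \<open>\<sim>\<^sup>I\<close> under all contexts is a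
  barbed saturated bisimulation. Barbs are preserved because each barb is detected by an IPO
  transition and is contextual. For reductions, a reduction \<open>C[P] \<rightsquigarrow> d \<circ> r\<close> is a redex square;
  its redex IPO factors \<open>C = g \<circ> e\<close> with \<open>g\<close> reactive and gives a transition
  \<open>P \<midarrow>e\<rightarrow>\<^sub>I f \<circ> r\<close>. Matching it by \<open>Q \<midarrow>e\<rightarrow>\<^sub>I Q'\<close> and putting the IPO square for \<open>Q\<close> back into
  the reactive context \<open>g\<close> yields \<open>C[Q] \<rightsquigarrow> g \<circ> Q'\<close>, whose reduct is again in the closure.\<close>

lemma category_idt:
  "category K \<Longrightarrow> dom K (idt K X) = X \<and> cod K (idt K X) = X"
  unfolding category_def by blast

lemma category_comp:
  "category K \<Longrightarrow> dom K g = cod K f \<Longrightarrow> dom K (comp K g f) = dom K f \<and> cod K (comp K g f) = cod K g"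
  unfolding category_def by blast

lemma category_idt_comp:
  "category K \<Longrightarrow> comp K (idt K (cod K f)) f = f"
  unfolding category_def by blast

lemma category_assoc:
  "category K \<Longrightarrow> dom K g = cod K f \<Longrightarrow> dom K h = cod K g \<Longrightarrow>
   comp K h (comp K g f) = comp K (comp K h g) f"
  unfolding category_def by blast

lemma reactive_system_category: "reactive_system K z D R \<Longrightarrow> category K"
  unfolding reactive_system_def by blast

lemma reactive_system_comp_closed:
  "reactive_system K z D R \<Longrightarrow> d \<in> D \<Longrightarrow> d' \<in> D \<Longrightarrow> dom K d = cod K d' \<Longrightarrow> comp K d d' \<in> D"
  unfolding reactive_system_def by blast

lemma reactive_system_comp_reflecting:
  "reactive_system K z D R \<Longrightarrow> dom K d = cod K d' \<Longrightarrow> comp K d d' \<in> D \<Longrightarrow> d \<in> D \<and> d' \<in> D"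
  unfolding reactive_system_def by blast

lemma reactive_system_rule:
  "reactive_system K z D R \<Longrightarrow> (l, r) \<in> R \<Longrightarrow> dom K l = z \<and> dom K r = z \<and> cod K l = cod K r"
  unfolding reactive_system_def by blast

lemma ipo_trans_target:
  assumes rs: "reactive_system K z D R" and tr: "ipo_trans K z D R P C P'"
  shows "dom K P' = z \<and> cod K P' = cod K C"
proof -
  obtain d l r where lr: "(l, r) \<in> R" and ipo: "IPO K P l C d" and P': "P' = comp K d r"
    using tr unfolding ipo_trans_def by blast
  have "dom K d = cod K r" "cod K d = cod K C"
    using ipo reactive_system_rule[OF rs lr] unfolding IPO_def comm_square_def by auto
  then show ?thesis
    using P' category_comp[OF reactive_system_category[OF rs]] reactive_system_rule[OF rs lr] by auto
qed

lemma redex_square_ipo_trans: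
  assumes rs: "reactive_system K z D R" and redex: "has_redex_IPOs K z D R"
    and tP: "term K z P" and dC: "dom K C = cod K P"
    and red: "reduces K D R (comp K C P) P'"
  shows "\<exists>e g P''. ipo_trans K z D R P e P'' \<and> g \<in> D \<and> dom K g = cod K e \<and>
           comp K g e = C \<and> P' = comp K g P''"
proof -
  have cat: "category K" using rs by (rule reactive_system_category)
  obtain l r d where lr: "(l, r) \<in> R" and d: "d \<in> D" and dd: "dom K d = cod K l"
    and eq: "comp K C P = comp K d l" and P': "P' = comp K d r"
    using red unfolding reduces_def by blast
  have "cod K C = cod K d"
    using category_comp[OF cat dC] category_comp[OF cat dd] eq by metis
  then have "comm_square K P l C d"
    unfolding comm_square_def using reactive_system_rule[OF rs lr] tP dC dd eq
    unfolding term_def by simp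
  then obtain e f g where cand: "candidate K P l C d e f g" and ipo: "IPO K P l e f"
    using redex lr d tP unfolding has_redex_IPOs_def by blast
  have dg: "dom K g = cod K f" and ge: "comp K g e = C" and gf: "comp K g f = d"
    and dr: "dom K f = cod K r" and ef: "cod K e = cod K f"
    using cand reactive_system_rule[OF rs lr] unfolding candidate_def by auto
  have "g \<in> D" "f \<in> D"
    using reactive_system_comp_reflecting[OF rs dg] gf d by auto
  moreover have "ipo_trans K z D R P e (comp K f r)"
    unfolding ipo_trans_def using tP lr ipo \<open>f \<in> D\<close> by blast
  moreover have "P' = comp K g (comp K f r)"
    using P' gf category_assoc[OF cat dr dg] by simp
  ultimately show ?thesis
    using ge dg ef by (intro exI[where x = e] exI[where x = g] exI[where x = "comp K f r"]) simp
qed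

lemma ipo_trans_in_reactive_context:
  assumes rs: "reactive_system K z D R" and tr: "ipo_trans K z D R Q e Q'"
    and g: "g \<in> D" and dg: "dom K g = cod K e"
  shows "reduces K D R (comp K (comp K g e) Q) (comp K g Q')"
proof -
  have cat: "category K" using rs by (rule reactive_system_category)
  obtain d l r where d: "d \<in> D" and lr: "(l, r) \<in> R" and ipo: "IPO K Q l e d"
    and Q': "Q' = comp K d r"
    using tr unfolding ipo_trans_def by blast
  have sq: "comp K e Q = comp K d l" and dl: "dom K d = cod K l" and ed: "cod K e = cod K d"
    and eQ: "dom K e = cod K Q"
    using ipo unfolding IPO_def comm_square_def by auto
  have dgd: "dom K g = cod K d" using dg ed by simp
  have dr: "dom K d = cod K r" using dl reactive_system_rule[OF rs lr] by simp
  have "comp K (comp K g e) Q = comp K g (comp K e Q)"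
    using category_assoc[OF cat eQ dg] by simp
  also have "\<dots> = comp K (comp K g d) l"
    using sq category_assoc[OF cat dl dgd] by simp
  finally show ?thesis
    unfolding reduces_def Q' category_assoc[OF cat dr dgd]
    using reactive_system_comp_closed[OF rs g d dgd] lr category_comp[OF cat dgd] dl by auto
qed

lemma bs_bisimilar_sym:
  "bs_bisimilar K z D R Obs barb P Q \<Longrightarrow> bs_bisimilar K z D R Obs barb Q P"
  unfolding bs_bisimilar_def bs_bisimulation_def by (meson symD)

lemma ipo_bisimilar_sym:
  assumes "ipo_bisimilar K z D R P Q"
  shows "ipo_bisimilar K z D R Q P"
proof -
  obtain S where S: "ipo_bisimulation K z D R S" "(P, Q) \<in> S"
    using assms unfolding ipo_bisimilar_def by blast
  have "ipo_bisimulation K z D R (converse S)"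
    using S(1) unfolding ipo_bisimulation_def term_rel_def by fastforce
  then show ?thesis using S(2) unfolding ipo_bisimilar_def by blast
qed

lemma ipo_bisimilar_term:
  "ipo_bisimilar K z D R P Q \<Longrightarrow> term K z P \<and> term K z Q \<and> cod K P = cod K Q"
  unfolding ipo_bisimilar_def ipo_bisimulation_def term_rel_def by blast

lemma ipo_bisimilar_term_rel: "term_rel K z {(P, Q). ipo_bisimilar K z D R P Q}"
  unfolding term_rel_def by (auto dest: ipo_bisimilar_term)

lemma ipo_bisimilar_simulation:
  "ipo_bisimilar K z D R P Q \<Longrightarrow> ipo_trans K z D R P C P' \<Longrightarrow>
   \<exists>Q'. ipo_trans K z D R Q C Q' \<and> ipo_bisimilar K z D R P' Q'"
  unfolding ipo_bisimilar_def ipo_bisimulation_def by blast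

lemma bs_bisimilar_imp_ipo_bisimilar:
  assumes stable: "\<forall>C. stable_label K z D R (bs_bisimilar K z D R Obs barb) C"
    and PQ: "bs_bisimilar K z D R Obs barb P Q"
  shows "ipo_bisimilar K z D R P Q"
proof -
  let ?S = "{(P, Q). bs_bisimilar K z D R Obs barb P Q}"
  have "ipo_bisimulation K z D R ?S"
    unfolding ipo_bisimulation_def
  proof (intro conjI)
    show "term_rel K z ?S"
      unfolding term_rel_def bs_bisimilar_def bs_bisimulation_def by blast
    show "\<forall>(P, Q)\<in>?S. \<forall>C P'. ipo_trans K z D R P C P' \<longrightarrow>
          (\<exists>Q'. ipo_trans K z D R Q C Q' \<and> (P', Q') \<in> ?S)"
      using stable unfolding stable_label_def by blast
    show "\<forall>(P, Q)\<in>?S. \<forall>C Q'. ipo_trans K z D R Q C Q' \<longrightarrow>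
          (\<exists>P'. ipo_trans K z D R P C P' \<and> (P', Q') \<in> ?S)"
    proof clarsimp
      fix P Q C Q'
      assume PQ: "bs_bisimilar K z D R Obs barb P Q" and tr: "ipo_trans K z D R Q C Q'"
      from PQ have "bs_bisimilar K z D R Obs barb Q P" by (rule bs_bisimilar_sym)
      then obtain P' where trP: "ipo_trans K z D R P C P'" and Q'P': "bs_bisimilar K z D R Obs barb Q' P'"
        using stable tr unfolding stable_label_def by blast
      then show "\<exists>P'. ipo_trans K z D R P C P' \<and> bs_bisimilar K z D R Obs barb P' Q'"
        using trP bs_bisimilar_sym[OF Q'P'] by blast
    qed
  qed
  then show ?thesis using PQ unfolding ipo_bisimilar_def by blast
qed

lemma ipo_bisimilar_barb_in_context:
  assumes ctx: "\<forall>o'\<in>Obs. contextual_barb K z barb o'"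
    and cap: "O_capturing K z D R Obs barb UNIV"
    and PQ: "ipo_bisimilar K z D R P Q" and o': "o' \<in> Obs"
    and dC: "dom K C = cod K P" and b: "barb (comp K C P) o'"
  shows "barb (comp K C Q) o'"
proof -
  have tP: "term K z P" and tQ: "term K z Q" and PQ_cod: "cod K P = cod K Q"
    using ipo_bisimilar_term[OF PQ] by auto
  obtain L where L: "\<forall>P. term K z P \<longrightarrow> (barb P o' \<longleftrightarrow> (\<exists>P'. ipo_trans K z D R P L P'))"
    using cap o' unfolding O_capturing_def by blast
  have "barb P o' \<longrightarrow> barb Q o'"
    using L tP tQ ipo_bisimilar_simulation[OF PQ] by blast
  then show ?thesis
    using ctx o' tP tQ PQ_cod dC b unfolding contextual_barb_def by blast
qed

lemma ipo_bisimilar_reduction_in_context: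
  assumes rs: "reactive_system K z D R" and redex: "has_redex_IPOs K z D R"
    and PQ: "ipo_bisimilar K z D R P Q" and dC: "dom K C = cod K P"
    and red: "reduces K D R (comp K C P) P'"
  shows "\<exists>g P'' Q''. ipo_bisimilar K z D R P'' Q'' \<and> dom K g = cod K P'' \<and>
           P' = comp K g P'' \<and> reduces K D R (comp K C Q) (comp K g Q'')"
proof -
  have tP: "term K z P" using ipo_bisimilar_term[OF PQ] by blast
  obtain e g P'' where trP: "ipo_trans K z D R P e P''" and g: "g \<in> D"
    and dg: "dom K g = cod K e" and ge: "comp K g e = C" and P': "P' = comp K g P''"
    using redex_square_ipo_trans[OF rs redex tP dC red] by blast
  obtain Q'' where trQ: "ipo_trans K z D R Q e Q''" and PQ'': "ipo_bisimilar K z D R P'' Q''"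
    using ipo_bisimilar_simulation[OF PQ trP] by blast
  have "dom K g = cod K P''" using ipo_trans_target[OF rs trP] dg by simp
  moreover have "reduces K D R (comp K C Q) (comp K g Q'')"
    using ipo_trans_in_reactive_context[OF rs trQ g dg] ge by simp
  ultimately show ?thesis using PQ'' P' by blast
qed

definition ctx_closure :: "('o, 'a) cat \<Rightarrow> ('a \<times> 'a) set \<Rightarrow> ('a \<times> 'a) set" where
  "ctx_closure K S = {(comp K C P, comp K C Q) | C P Q. (P, Q) \<in> S \<and> dom K C = cod K P}"

lemma ctx_closure_term_rel:
  "category K \<Longrightarrow> term_rel K z S \<Longrightarrow> term_rel K z (ctx_closure K S)"
  unfolding term_rel_def ctx_closure_def term_def using category_comp by fastforce

lemma ctx_closure_sym:
  "term_rel K z S \<Longrightarrow> sym S \<Longrightarrow> sym (ctx_closure K S)"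
  unfolding sym_def ctx_closure_def term_rel_def by fastforce

lemma ctx_closure_increasing:
  assumes cat: "category K" and S: "term_rel K z S" and PQ: "(P, Q) \<in> S"
  shows "(P, Q) \<in> ctx_closure K S"
proof -
  have "cod K P = cod K Q" using S PQ unfolding term_rel_def by blast
  then have "P = comp K (idt K (cod K P)) P" "Q = comp K (idt K (cod K P)) Q"
    using category_idt_comp[OF cat] by metis+
  then show ?thesis
    unfolding ctx_closure_def using PQ category_idt[OF cat] by blast
qed

lemma ctx_closure_comp:
  assumes cat: "category K" and S: "term_rel K z S"
    and XY: "(X, Y) \<in> ctx_closure K S" and dC: "dom K C' = cod K X"
  shows "\<exists>C P Q. (P, Q) \<in> S \<and> dom K C = cod K P \<and> comp K C' X = comp K C P \<and> comp K C' Y = comp K C Q"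
proof -
  obtain C P Q where PQ: "(P, Q) \<in> S" and dCP: "dom K C = cod K P"
    and X: "X = comp K C P" and Y: "Y = comp K C Q"
    using XY unfolding ctx_closure_def by blast
  have dC'C: "dom K C' = cod K C" using dC X category_comp[OF cat dCP] by simp
  have "dom K (comp K C' C) = cod K P" using category_comp[OF cat dC'C] dCP by simp
  moreover have "comp K C' X = comp K (comp K C' C) P"
    using X category_assoc[OF cat dCP dC'C] by simp
  moreover have "comp K C' Y = comp K (comp K C' C) Q"
    using Y category_assoc[OF cat _ dC'C, of Q] dCP PQ S unfolding term_rel_def by auto
  ultimately show ?thesis using PQ by blast
qed

lemma ctx_closure_ipo_bisimilar_bs_bisimulation:
  assumes rs: "reactive_system K z D R" and redex: "has_redex_IPOs K z D R"
    and ctx: "\<forall>o'\<in>Obs. contextual_barb K z barb o'"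
    and cap: "O_capturing K z D R Obs barb UNIV"
  shows "bs_bisimulation K z D R Obs barb (ctx_closure K {(P, Q). ipo_bisimilar K z D R P Q})"
    (is "bs_bisimulation K z D R Obs barb (ctx_closure K ?I)")
proof -
  have cat: "category K" using rs by (rule reactive_system_category)
  have closure_step:
    "(\<forall>o'\<in>Obs. barb (comp K C' X) o' \<longrightarrow> barb (comp K C' Y) o') \<and>
     (\<forall>X'. reduces K D R (comp K C' X) X' \<longrightarrow>
        (\<exists>Y'. reduces K D R (comp K C' Y) Y' \<and> (X', Y') \<in> ctx_closure K ?I))"
    if XY: "(X, Y) \<in> ctx_closure K ?I" and dC': "dom K C' = cod K X" for X Y C'
  proof -
    obtain C P Q where PQ: "ipo_bisimilar K z D R P Q" and dC: "dom K C = cod K P"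
      and X: "comp K C' X = comp K C P" and Y: "comp K C' Y = comp K C Q"
      using ctx_closure_comp[OF cat ipo_bisimilar_term_rel XY dC'] by blast
    show ?thesis
    proof (intro conjI ballI allI impI)
      fix o' assume "o' \<in> Obs" "barb (comp K C' X) o'"
      then show "barb (comp K C' Y) o'"
        using ipo_bisimilar_barb_in_context[OF ctx cap PQ _ dC] X Y by simp
    next
      fix X' assume "reduces K D R (comp K C' X) X'"
      then have "reduces K D R (comp K C P) X'" using X by simp
      then obtain g P'' Q'' where PQ'': "ipo_bisimilar K z D R P'' Q''"
        and dg: "dom K g = cod K P''" and X': "X' = comp K g P''"
        and red: "reduces K D R (comp K C Q) (comp K g Q'')"
        using ipo_bisimilar_reduction_in_context[OF rs redex PQ dC] by blast
      have "(X', comp K g Q'') \<in> ctx_closure K ?I"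
        unfolding ctx_closure_def using PQ'' dg X' by blast
      then show "\<exists>Y'. reduces K D R (comp K C' Y) Y' \<and> (X', Y') \<in> ctx_closure K ?I"
        using red Y by (intro exI[where x = "comp K g Q''"]) simp
    qed
  qed
  show ?thesis
    unfolding bs_bisimulation_def
  proof (intro conjI)
    show "term_rel K z (ctx_closure K ?I)"
      using cat ipo_bisimilar_term_rel by (rule ctx_closure_term_rel)
    have "sym ?I" unfolding sym_def by (auto intro: ipo_bisimilar_sym)
    then show "sym (ctx_closure K ?I)"
      using ipo_bisimilar_term_rel by (rule ctx_closure_sym[rotated])
  qed (use closure_step in fast)
qed

lemma ipo_bisimilar_imp_bs_bisimilar:
  assumes "reactive_system K z D R" and "has_redex_IPOs K z D R"
    and "\<forall>o'\<in>Obs. contextual_barb K z barb o'"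
    and "O_capturing K z D R Obs barb UNIV"
    and PQ: "ipo_bisimilar K z D R P Q"
  shows "bs_bisimilar K z D R Obs barb P Q"
proof -
  have "(P, Q) \<in> ctx_closure K {(P, Q). ipo_bisimilar K z D R P Q}"
    using ctx_closure_increasing[OF reactive_system_category[OF assms(1)] ipo_bisimilar_term_rel] PQ
    by blast
  then show ?thesis
    using ctx_closure_ipo_bisimilar_bs_bisimulation[OF assms(1-4)] unfolding bs_bisimilar_def by blast
qed

theorem mainTheorem3:
  fixes K :: "('o, 'a) cat" and z :: 'o and D :: "'a set" and R :: "('a \<times> 'a) set"
    and Obs :: "'b set" and barb :: "'a \<Rightarrow> 'b \<Rightarrow> bool"
  assumes "reactive_system K z D R"
    and "has_redex_IPOs K z D R"
    and "\<forall>o'\<in>Obs. contextual_barb K z barb o'"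
    and "O_capturing K z D R Obs barb UNIV"
    and "\<forall>C. stable_label K z D R (bs_bisimilar K z D R Obs barb) C"
  shows "\<forall>P Q. ipo_bisimilar K z D R P Q \<longleftrightarrow> bs_bisimilar K z D R Obs barb P Q"
  using ipo_bisimilar_imp_bs_bisimilar[OF assms(1-4)] bs_bisimilar_imp_ipo_bisimilar[OF assms(5)]
  by blast

end
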